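(* Let $M\subset\mathbb{R}^2$ be open with coordinates $(x,u)$, let $M^{(1)}$ be the first-order jet space with coordinates $(x,u,u_x)$, and consider the ODE $u_{xx}=\phi(x,u,u_x)$ with associated vector field $\mathbf{A}=\partial_x+u_x\partial_u+\phi\,\partial_{u_x}$. Let $(\partial_u,\lambda_1)$ and $(\partial_u,\lambda_2)$ be the canonical representatives of two non-equivalent generalized $\mathcal{C}^\infty$-symmetries of this ODE. Let $\mathbf{X}_i=\partial_u+\lambda_i\partial_{u_x}$, $\rho=\dfrac{\mathbf{X}_1(\lambda_2)-\mathbf{X}_2(\lambda_1)}{\lambda_1-\lambda_2}$, let $f_1,f_2\in C^\infty(M^{(1)})$ satisfy $\dfrac{\mathbf{X}_1(f_2)}{f_2}=\dfrac{\mathbf{X}_2(f_1)}{f_1}=\rho$, let $\mathbf{Y}_i=f_i\mathbf{X}_i$, $\rho_i=\lambda_i-\mathbf{A}(f_i)/f_i$, and let $g_1,g_2\in C^\infty(M^{(1)})$ satisfy $\mathbf{A}(g_1)=\rho_1g_1$, $\mathbf{Y}_2(g_1)=0$, $\mathbf{A}(g_2)=\rho_2g_2$, $\mathbf{Y}_1(g_2)=0$. Let $\{x,w_1,w_2\}$ be local coordinates on $M^{(1)}$ with $\mathbf{Y}_1=\partial_{w_2}$, $\mathbf{Y}_2=\partial_{w_1}$, and $\phi_i=\mathbf{A}(w_i)$, so that $\phi_1=\phi_1(x,w_1)$, $\phi_2=\phi_2(x,w_2)$ and $g_1=g_1(x,w_2)$, $g_2=g_2(x,w_1)$ in these coordinates.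 Let $\widehat{I_1}(x,w_1)$ and $\widehat{I_2}(x,w_2)$ be first integrals of the reduced equations $(w_1)_x=\phi_1(x,w_1)$ and $(w_2)_x=\phi_2(x,w_2)$ associated to the integrating factors $1/g_2(x,w_1)$ and $1/g_1(x,w_2)$ respectively (i.e. $(\widehat{I_1})_{w_1}=1/g_2$, $(\widehat{I_2})_{w_2}=1/g_1$). For constants $C_i\in\mathbb{R}$, write the auxiliary equations $\widehat{I_i}\big(x,w_i(x,u,u_x)\big)=C_i$ locally in the form $u_x=H_i(x,u,C_i)$ ($i=1,2$). Then, for $i=1,2$, the function $$\widetilde{\nu}_i(x,u)=\frac{1}{f_i\big(x,u,H_i(x,u,C_i)\big)\,g_i\big(x,u,H_i(x,u,C_i)\big)}$$ is an integrating factor of the auxiliary equation $u_x=H_i(x,u,C_i)$.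
   Context: All functions are smooth and all statements are local, on an open set where $\lambda_1-\lambda_2$, $f_1,f_2,g_1,g_2$ do not vanish. For smooth $\xi,\eta,\lambda$ on $M^{(1)}$ and $\mathbf{v}=\xi\partial_x+\eta\partial_u$, the $\lambda$-prolongation is $\mathbf{v}^{[\lambda,(1)]}=\mathbf{v}+\big((\mathbf{A}+\lambda)(\eta)-(\mathbf{A}+\lambda)(\xi)u_x\big)\partial_{u_x}$. The pair $(\mathbf{v},\lambda)$ is a generalized $\mathcal{C}^\infty$-symmetry of the ODE if $[\mathbf{v}^{[\lambda,(1)]},\mathbf{A}]=\lambda\,\mathbf{v}^{[\lambda,(1)]}-(\mathbf{A}+\lambda)(\xi)\,\mathbf{A}$. Two generalized $\mathcal{C}^\infty$-symmetries are $\mathbf{A}$-equivalent if $\{\mathbf{A},\mathbf{v}_1^{[\lambda_1,(1)]},\mathbf{v}_2^{[\lambda_2,(1)]}\}$ is linearly dependent over $C^\infty(M^{(1)})$; if $Q=\eta-\xi u_x$, the canonical representative of the class of $(\mathbf{v},\lambda)$ is $(\partial_u,\lambda+\mathbf{A}(Q)/Q)$. A first integral of a first-order ODE $w_x=\varphi(x,w)$ associated to an integrating factor $\nu$ is a function $\widehat{I}(x,w)$ with $\widehat{I}_w=\nu$ and $\widehat{I}_x=-\nu\varphi$. A function $\nu(x,u)$ is an integrating factor of a first-order ODE $u_x=H(x,u)$ if $\nu_x+(H\nu)_u=0$. *)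

theory Defs
  imports "HOL-Analysis.Analysis"
begin

text \<open>Functions on the jet space M^(1) with coordinates (x,u,p), p = u_x.\<close>
type_synonym fn3 = "real \<Rightarrow> real \<Rightarrow> real \<Rightarrow> real"
text \<open>Vector field a d/dx + b d/du + c d/dp, represented by its coefficients (a,b,c).\<close>
type_synonym vf3 = "fn3 \<times> fn3 \<times> fn3"

definition pd :: "nat \<Rightarrow> fn3 \<Rightarrow> fn3" where
  "pd i F = (\<lambda>x u p. if i = 0 then deriv (\<lambda>t. F t u p) x
                     else if i = 1 then deriv (\<lambda>t. F x t p) u
                     else deriv (\<lambda>t. F x u t) p)"

definition smooth3_on :: "(real \<times> real \<times> real) set \<Rightarrow> fn3 \<Rightarrow> bool" where
  "smooth3_on U F \<longleftrightarrow>
     (\<forall>ds. set ds \<subseteq> {0,1,2} \<longrightarrow> (\<lambda>(x,u,p). foldr pd ds F x u p) differentiable_on U)"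

definition pd2 :: "nat \<Rightarrow> (real \<Rightarrow> real \<Rightarrow> real) \<Rightarrow> real \<Rightarrow> real \<Rightarrow> real" where
  "pd2 i F = (\<lambda>x w. if i = 0 then deriv (\<lambda>t. F t w) x else deriv (\<lambda>t. F x t) w)"

definition smooth2_on :: "(real \<times> real) set \<Rightarrow> (real \<Rightarrow> real \<Rightarrow> real) \<Rightarrow> bool" where
  "smooth2_on W F \<longleftrightarrow>
     (\<forall>ds. set ds \<subseteq> {0,1} \<longrightarrow> (\<lambda>(x,w). foldr pd2 ds F x w) differentiable_on W)"

definition comp :: "nat \<Rightarrow> vf3 \<Rightarrow> fn3" where
  "comp i V = (if i = 0 then fst V else if i = 1 then fst (snd V) else snd (snd V))"

definition vapp :: "vf3 \<Rightarrow> fn3 \<Rightarrow> fn3" where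
  "vapp V F = (\<lambda>x u p. comp 0 V x u p * pd 0 F x u p + comp 1 V x u p * pd 1 F x u p
                      + comp 2 V x u p * pd 2 F x u p)"

definition lie :: "vf3 \<Rightarrow> vf3 \<Rightarrow> vf3" where
  "lie V W = ((\<lambda>x u p. vapp V (comp 0 W) x u p - vapp W (comp 0 V) x u p),
              (\<lambda>x u p. vapp V (comp 1 W) x u p - vapp W (comp 1 V) x u p),
              (\<lambda>x u p. vapp V (comp 2 W) x u p - vapp W (comp 2 V) x u p))"

definition Afield :: "fn3 \<Rightarrow> vf3" where
  "Afield phi = ((\<lambda>x u p. 1), (\<lambda>x u p. p), phi)"

definition lam_prolong :: "fn3 \<Rightarrow> fn3 \<Rightarrow> fn3 \<Rightarrow> fn3 \<Rightarrow> vf3" where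
  "lam_prolong phi xi eta lam =
     (xi, eta, (\<lambda>x u p. (vapp (Afield phi) eta x u p + lam x u p * eta x u p)
                       - (vapp (Afield phi) xi x u p + lam x u p * xi x u p) * p))"

definition gen_Cinf_sym :: "(real \<times> real \<times> real) set \<Rightarrow> fn3 \<Rightarrow> fn3 \<Rightarrow> fn3 \<Rightarrow> fn3 \<Rightarrow> bool" where
  "gen_Cinf_sym U phi xi eta lam \<longleftrightarrow>
     (\<forall>(x,u,p)\<in>U. \<forall>i\<in>{0,1,2::nat}.
        comp i (lie (lam_prolong phi xi eta lam) (Afield phi)) x u p
        = lam x u p * comp i (lam_prolong phi xi eta lam) x u p
          - (vapp (Afield phi) xi x u p + lam x u p * xi x u p) * comp i (Afield phi) x u p)"

definition A_equivalent ::
  "(real \<times> real \<times> real) set \<Rightarrow> fn3 \<Rightarrow> fn3 \<Rightarrow> fn3 \<Rightarrow> fn3 \<Rightarrow> fn3 \<Rightarrow> fn3 \<Rightarrow> fn3 \<Rightarrow> bool" where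
  "A_equivalent U phi xi1 eta1 lam1 xi2 eta2 lam2 \<longleftrightarrow>
     (\<exists>a b c. smooth3_on U a \<and> smooth3_on U b \<and> smooth3_on U c \<and>
        (\<exists>(x,u,p)\<in>U. a x u p \<noteq> 0 \<or> b x u p \<noteq> 0 \<or> c x u p \<noteq> 0) \<and>
        (\<forall>(x,u,p)\<in>U. \<forall>i\<in>{0,1,2::nat}.
           a x u p * comp i (Afield phi) x u p
           + b x u p * comp i (lam_prolong phi xi1 eta1 lam1) x u p
           + c x u p * comp i (lam_prolong phi xi2 eta2 lam2) x u p = 0))"

text \<open>Characteristic Q = eta - xi u_x and the lambda of the canonical representative
  (d/du, lam + A(Q)/Q).\<close>
definition charQ :: "fn3 \<Rightarrow> fn3 \<Rightarrow> fn3" where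
  "charQ xi eta = (\<lambda>x u p. eta x u p - xi x u p * p)"

definition canon_lambda :: "fn3 \<Rightarrow> fn3 \<Rightarrow> fn3 \<Rightarrow> fn3 \<Rightarrow> fn3" where
  "canon_lambda phi xi eta lam =
     (\<lambda>x u p. lam x u p + vapp (Afield phi) (charQ xi eta) x u p / charQ xi eta x u p)"

definition Xvf :: "fn3 \<Rightarrow> vf3" where
  "Xvf lam = ((\<lambda>x u p. 0), (\<lambda>x u p. 1), lam)"

definition vscale :: "fn3 \<Rightarrow> vf3 \<Rightarrow> vf3" where
  "vscale f V = ((\<lambda>x u p. f x u p * comp 0 V x u p), (\<lambda>x u p. f x u p * comp 1 V x u p),
                 (\<lambda>x u p. f x u p * comp 2 V x u p))"

definition first_integral_on ::
  "(real \<times> real) set \<Rightarrow> (real \<Rightarrow> real \<Rightarrow> real) \<Rightarrow> (real \<Rightarrow> real \<Rightarrow> real) \<Rightarrow> (real \<Rightarrow> real \<Rightarrow> real) \<Rightarrow> bool" where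
  "first_integral_on W Phi nu I \<longleftrightarrow>
     (\<forall>(x,w)\<in>W. pd2 1 I x w = nu x w \<and> pd2 0 I x w = - nu x w * Phi x w)"

definition integrating_factor_on ::
  "(real \<times> real) set \<Rightarrow> (real \<Rightarrow> real \<Rightarrow> real) \<Rightarrow> (real \<Rightarrow> real \<Rightarrow> real) \<Rightarrow> bool" where
  "integrating_factor_on V H nu \<longleftrightarrow>
     (\<forall>(x,u)\<in>V. deriv (\<lambda>t. nu t u) x + deriv (\<lambda>t. H x t * nu x t) u = 0)"

end

theory Submission
  imports Defs
begin

text \<open>
  Write \<open>w, G, \<lambda>, f, g\<close> for \<open>w\<^sub>1, G\<^sub>2, \<lambda>\<^sub>1, f\<^sub>1, g\<^sub>1\<close> (or \<open>w\<^sub>2, G\<^sub>1, \<lambda>\<^sub>2, f\<^sub>2, g\<^sub>2\<close>).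
  Since \<open>Y\<^sub>1(w\<^sub>1) = 0\<close> and \<open>Y\<^sub>2(w\<^sub>1) = 1\<close>, we have \<open>w\<^sub>u + \<lambda> w\<^sub>p = 0\<close> and \<open>w\<^sub>p \<noteq> 0\<close>.
  Differentiating the auxiliary equation \<open>I(x, w(x,u,H)) = C\<close> in \<open>u\<close> and in \<open>x\<close>, and using
  \<open>I\<^sub>w = 1/G \<noteq> 0\<close>, \<open>I\<^sub>x = -\<Phi>/G\<close> and \<open>A(w) = \<Phi>(x,w)\<close>, gives \<open>H\<^sub>u = \<lambda>\<close> and \<open>H\<^sub>x + H H\<^sub>u = \<phi>\<close>
  on the graph \<open>p = H(x,u)\<close>. On such a graph \<open>\<partial>\<^sub>x + H \<partial>\<^sub>u\<close> applied to \<open>F(x,u,H)\<close> is \<open>A(F)\<close>,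
  so \<open>1/F(x,u,H)\<close> is an integrating factor of \<open>u\<^sub>x = H\<close> as soon as \<open>A(F) = H\<^sub>u F\<close>. For
  \<open>F = f g\<close> this is \<open>A(f g) = A(f) g + f (\<lambda> - A(f)/f) g = \<lambda> f g\<close>, by the equation defining \<open>g\<close>.
\<close>

lemma has_real_derivative_along_curve:
  fixes F :: "'a::real_normed_vector \<Rightarrow> real"
  assumes F: "(F has_derivative F') (at (\<gamma> s))"
    and \<gamma>: "(\<gamma> has_vector_derivative \<gamma>') (at s)"
  shows "((\<lambda>t. F (\<gamma> t)) has_real_derivative F' \<gamma>') (at s)"
proof -
  have "((F \<circ> \<gamma>) has_derivative (\<lambda>h. F' (h *\<^sub>R \<gamma>'))) (at s)"
    using diff_chain_at[OF \<gamma>[unfolded has_vector_derivative_def] F] by (simp add: o_def)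
  moreover have "(\<lambda>h. F' (h *\<^sub>R \<gamma>')) = (*) (F' \<gamma>')"
    using linear_cmul[OF has_derivative_linear[OF F]] by (auto simp: fun_eq_iff)
  ultimately show ?thesis
    by (simp add: has_field_derivative_def o_def)
qed

lemma pd_eq_frechet_derivative:
  assumes F': "((\<lambda>(x,u,p). F x u p) has_derivative F') (at (x,u,p))"
  shows "pd 0 F x u p = F' (1,0,0)" "pd 1 F x u p = F' (0,1,0)" "pd 2 F x u p = F' (0,0,1)"
proof -
  have "((\<lambda>t. F t u p) has_real_derivative F' (1,0,0)) (at x)"
    using has_real_derivative_along_curve[of "\<lambda>(x,u,p). F x u p" F' "\<lambda>t. (t,u,p)" x "(1,0,0)"] F'
    by (simp add: has_vector_derivative_Pair)
  moreover have "((\<lambda>t. F x t p) has_real_derivative F' (0,1,0)) (at u)"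
    using has_real_derivative_along_curve[of "\<lambda>(x,u,p). F x u p" F' "\<lambda>t. (x,t,p)" u "(0,1,0)"] F'
    by (simp add: has_vector_derivative_Pair)
  moreover have "((\<lambda>t. F x u t) has_real_derivative F' (0,0,1)) (at p)"
    using has_real_derivative_along_curve[of "\<lambda>(x,u,p). F x u p" F' "\<lambda>t. (x,u,t)" p "(0,0,1)"] F'
    by (simp add: has_vector_derivative_Pair)
  ultimately show "pd 0 F x u p = F' (1,0,0)" "pd 1 F x u p = F' (0,1,0)" "pd 2 F x u p = F' (0,0,1)"
    by (simp_all add: pd_def DERIV_imp_deriv)
qed

lemma pd2_eq_frechet_derivative:
  assumes F': "((\<lambda>(x,w). F x w) has_derivative F') (at (x,w))"
  shows "pd2 0 F x w = F' (1,0)" "pd2 1 F x w = F' (0,1)"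
proof -
  have "((\<lambda>t. F t w) has_real_derivative F' (1,0)) (at x)"
    using has_real_derivative_along_curve[of "\<lambda>(x,w). F x w" F' "\<lambda>t. (t,w)" x "(1,0)"] F'
    by (simp add: has_vector_derivative_Pair)
  moreover have "((\<lambda>t. F x t) has_real_derivative F' (0,1)) (at w)"
    using has_real_derivative_along_curve[of "\<lambda>(x,w). F x w" F' "\<lambda>t. (x,t)" w "(0,1)"] F'
    by (simp add: has_vector_derivative_Pair)
  ultimately show "pd2 0 F x w = F' (1,0)" "pd2 1 F x w = F' (0,1)"
    by (simp_all add: pd2_def DERIV_imp_deriv)
qed

lemma has_real_derivative_compose3:
  assumes F: "(\<lambda>(x,u,p). F x u p) differentiable (at (a s, b s, c s))"
    and "(a has_real_derivative a') (at s)" "(b has_real_derivative b') (at s)"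
      "(c has_real_derivative c') (at s)"
  shows "((\<lambda>t. F (a t) (b t) (c t)) has_real_derivative
     a' * pd 0 F (a s) (b s) (c s) + b' * pd 1 F (a s) (b s) (c s) + c' * pd 2 F (a s) (b s) (c s)) (at s)"
proof -
  obtain F' where F': "((\<lambda>(x,u,p). F x u p) has_derivative F') (at (a s, b s, c s))"
    using F unfolding differentiable_def by blast
  have "(a', b', c') = a' *\<^sub>R (1,0,0) + b' *\<^sub>R (0,1,0) + c' *\<^sub>R ((0,0,1)::real\<times>real\<times>real)"
    by simp
  then have "F' (a', b', c') = a' * F' (1,0,0) + b' * F' (0,1,0) + c' * F' (0,0,1)"
    by (simp only: linear_add[OF has_derivative_linear[OF F']] linear_cmul[OF has_derivative_linear[OF F']]
        real_scaleR_def)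
  moreover have "((\<lambda>t. (a t, b t, c t)) has_vector_derivative (a', b', c')) (at s)"
    using assms(2-4) by (simp add: has_real_derivative_iff_has_vector_derivative has_vector_derivative_Pair)
  then have "((\<lambda>t. F (a t) (b t) (c t)) has_real_derivative F' (a', b', c')) (at s)"
    using has_real_derivative_along_curve[where \<gamma>="\<lambda>t. (a t, b t, c t)", OF F'] by simp
  ultimately show ?thesis
    using pd_eq_frechet_derivative[OF F'] by simp
qed

lemma has_real_derivative_compose2:
  assumes F: "(\<lambda>(x,w). F x w) differentiable (at (a s, b s))"
    and "(a has_real_derivative a') (at s)" "(b has_real_derivative b') (at s)"
  shows "((\<lambda>t. F (a t) (b t)) has_real_derivative a' * pd2 0 F (a s) (b s) + b' * pd2 1 F (a s) (b s)) (at s)"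
proof -
  obtain F' where F': "((\<lambda>(x,w). F x w) has_derivative F') (at (a s, b s))"
    using F unfolding differentiable_def by blast
  have "(a', b') = a' *\<^sub>R (1,0) + b' *\<^sub>R ((0,1)::real\<times>real)"
    by simp
  then have "F' (a', b') = a' * F' (1,0) + b' * F' (0,1)"
    by (simp only: linear_add[OF has_derivative_linear[OF F']] linear_cmul[OF has_derivative_linear[OF F']]
        real_scaleR_def)
  moreover have "((\<lambda>t. (a t, b t)) has_vector_derivative (a', b')) (at s)"
    using assms(2-3) by (simp add: has_real_derivative_iff_has_vector_derivative has_vector_derivative_Pair)
  then have "((\<lambda>t. F (a t) (b t)) has_real_derivative F' (a', b')) (at s)"
    using has_real_derivative_along_curve[where \<gamma>="\<lambda>t. (a t, b t)", OF F'] by simp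
  ultimately show ?thesis
    using pd2_eq_frechet_derivative[OF F'] by simp
qed

lemma smooth3_on_imp_differentiable_at:
  assumes "smooth3_on U F" "open U" "(x,u,p) \<in> U"
  shows "(\<lambda>(x,u,p). F x u p) differentiable (at (x,u,p))"
proof -
  have "(\<lambda>(x,u,p). F x u p) differentiable_on U"
    using assms(1) unfolding smooth3_on_def by (metis empty_subsetI foldr_Nil id_apply list.set(1))
  then show ?thesis
    using assms(2,3) differentiable_on_eq_differentiable_at by blast
qed

lemma smooth2_on_imp_differentiable_at:
  assumes "smooth2_on W F" "open W" "(x,w) \<in> W"
  shows "(\<lambda>(x,w). F x w) differentiable (at (x,w))"
proof -
  have "(\<lambda>(x,w). F x w) differentiable_on W"
    using assms(1) unfolding smooth2_on_def by (metis empty_subsetI foldr_Nil id_apply list.set(1))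
  then show ?thesis
    using assms(2,3) differentiable_on_eq_differentiable_at by blast
qed

lemma has_real_derivative_pd:
  assumes "(\<lambda>(x,u,p). F x u p) differentiable (at (x,u,p))"
  shows "((\<lambda>t. F t u p) has_real_derivative pd 0 F x u p) (at x)"
    and "((\<lambda>t. F x t p) has_real_derivative pd 1 F x u p) (at u)"
    and "((\<lambda>t. F x u t) has_real_derivative pd 2 F x u p) (at p)"
  using has_real_derivative_compose3[of F "\<lambda>t. t" x "\<lambda>t. u" "\<lambda>t. p" 1 0 0]
    has_real_derivative_compose3[of F "\<lambda>t. x" u "\<lambda>t. t" "\<lambda>t. p" 0 1 0]
    has_real_derivative_compose3[of F "\<lambda>t. x" p "\<lambda>t. u" "\<lambda>t. t" 0 0 1] assms
  by auto

lemma pd_mult: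
  assumes f: "(\<lambda>(x,u,p). f x u p) differentiable (at (x,u,p))"
    and g: "(\<lambda>(x,u,p). g x u p) differentiable (at (x,u,p))"
  shows "pd i (\<lambda>x u p. f x u p * g x u p) x u p = pd i f x u p * g x u p + f x u p * pd i g x u p"
  using DERIV_mult[OF has_real_derivative_pd(1)[OF f] has_real_derivative_pd(1)[OF g]]
    DERIV_mult[OF has_real_derivative_pd(2)[OF f] has_real_derivative_pd(2)[OF g]]
    DERIV_mult[OF has_real_derivative_pd(3)[OF f] has_real_derivative_pd(3)[OF g]]
  by (auto simp: pd_def DERIV_imp_deriv)

lemma vapp_mult:
  assumes "(\<lambda>(x,u,p). f x u p) differentiable (at (x,u,p))"
    and "(\<lambda>(x,u,p). g x u p) differentiable (at (x,u,p))"
  shows "vapp V (\<lambda>x u p. f x u p * g x u p) x u p = vapp V f x u p * g x u p + f x u p * vapp V g x u p"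
  using pd_mult[OF assms] by (simp add: vapp_def algebra_simps)

lemma has_real_derivative_along_graph:
  assumes F: "(\<lambda>(x,u,p). F x u p) differentiable (at (x, u, H x u))"
    and H: "(\<lambda>(x,u). H x u) differentiable (at (x,u))"
  shows "((\<lambda>t. F t u (H t u)) has_real_derivative
           pd 0 F x u (H x u) + pd2 0 H x u * pd 2 F x u (H x u)) (at x)"
    and "((\<lambda>t. F x t (H x t)) has_real_derivative
           pd 1 F x u (H x u) + pd2 1 H x u * pd 2 F x u (H x u)) (at u)"
proof -
  have "((\<lambda>t. H t u) has_real_derivative pd2 0 H x u) (at x)"
    using has_real_derivative_compose2[of H "\<lambda>t. t" x "\<lambda>t. u" 1 0] H by simp
  then show "((\<lambda>t. F t u (H t u)) has_real_derivative
           pd 0 F x u (H x u) + pd2 0 H x u * pd 2 F x u (H x u)) (at x)"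
    using has_real_derivative_compose3[of F "\<lambda>t. t" x "\<lambda>t. u" "\<lambda>t. H t u" 1 0] F by simp
  have "((\<lambda>t. H x t) has_real_derivative pd2 1 H x u) (at u)"
    using has_real_derivative_compose2[of H "\<lambda>t. x" u "\<lambda>t. t" 0 1] H by simp
  then show "((\<lambda>t. F x t (H x t)) has_real_derivative
           pd 1 F x u (H x u) + pd2 1 H x u * pd 2 F x u (H x u)) (at u)"
    using has_real_derivative_compose3[of F "\<lambda>t. x" u "\<lambda>t. t" "\<lambda>t. H x t" 0 1] F by simp
qed

lemma has_real_derivative_zero_if_constant_on_open:
  assumes V: "open V" "(x,u) \<in> V" and const: "\<forall>(x,u)\<in>V. K x u = C"
  shows "((\<lambda>t. K t u) has_real_derivative 0) (at x)"
    and "((\<lambda>t. K x t) has_real_derivative 0) (at u)"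
proof -
  have "open ((\<lambda>t. (t,u)) -` V)"
    by (intro open_vimage V continuous_intros)
  then show "((\<lambda>t. K t u) has_real_derivative 0) (at x)"
    by (rule has_field_derivative_transform_within_open[OF DERIV_const[of C]]) (use V const in auto)
  have "open ((\<lambda>t. (x,t)) -` V)"
    by (intro open_vimage V continuous_intros)
  then show "((\<lambda>t. K x t) has_real_derivative 0) (at u)"
    by (rule has_field_derivative_transform_within_open[OF DERIV_const[of C]]) (use V const in auto)
qed

lemma slopes_of_level_graph:
  fixes I G Phi H :: "real \<Rightarrow> real \<Rightarrow> real" and w phi lam :: fn3
  assumes V: "open V" "(x,u) \<in> V"
    and level: "\<forall>(x,u)\<in>V. I x (w x u (H x u)) = C"
    and H: "(\<lambda>(x,u). H x u) differentiable (at (x,u))"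
    and w: "(\<lambda>(x,u,p). w x u p) differentiable (at (x, u, H x u))"
    and I: "(\<lambda>(x,w). I x w) differentiable (at (x, w x u (H x u)))"
    and fi: "first_integral_on W Phi (\<lambda>x w. 1 / G x w) I" "(x, w x u (H x u)) \<in> W"
    and G: "G x (w x u (H x u)) \<noteq> 0"
    and Aw: "vapp (Afield phi) w x u (H x u) = Phi x (w x u (H x u))"
    and Xw: "pd 1 w x u (H x u) + lam x u (H x u) * pd 2 w x u (H x u) = 0"
      "pd 2 w x u (H x u) \<noteq> 0"
  shows "pd2 1 H x u = lam x u (H x u)"
    and "pd2 0 H x u + H x u * pd2 1 H x u = phi x u (H x u)"
proof -
  define h where "h = H x u"
  define y where "y = w x u h"
  have Iy: "pd2 1 I x y = 1 / G x y" "pd2 0 I x y = - (1 / G x y) * Phi x y"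
    using fi unfolding first_integral_on_def y_def h_def by auto
  have "((\<lambda>t. I t (w t u (H t u))) has_real_derivative
      pd2 0 I x y + (pd 0 w x u h + pd2 0 H x u * pd 2 w x u h) * pd2 1 I x y) (at x)"
    using has_real_derivative_compose2[of I "\<lambda>t. t" x "\<lambda>t. w t u (H t u)" 1, OF _ _
        has_real_derivative_along_graph(1)[OF w H]] I
    by (simp add: h_def y_def)
  then have dx: "pd2 0 I x y + (pd 0 w x u h + pd2 0 H x u * pd 2 w x u h) * pd2 1 I x y = 0"
    using has_real_derivative_zero_if_constant_on_open(1)[OF V level] DERIV_unique by blast
  have "((\<lambda>t. I x (w x t (H x t))) has_real_derivative
      (pd 1 w x u h + pd2 1 H x u * pd 2 w x u h) * pd2 1 I x y) (at u)"
    using has_real_derivative_compose2[of I "\<lambda>t. x" u "\<lambda>t. w x t (H x t)" 0, OF _ _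
        has_real_derivative_along_graph(2)[OF w H]] I
    by (simp add: h_def y_def)
  then have du: "(pd 1 w x u h + pd2 1 H x u * pd 2 w x u h) * pd2 1 I x y = 0"
    using has_real_derivative_zero_if_constant_on_open(2)[OF V level] DERIV_unique by blast
  have wp: "pd 2 w x u h \<noteq> 0" and wu: "pd 1 w x u h = - lam x u h * pd 2 w x u h"
    using Xw by (simp_all add: h_def eq_neg_iff_add_eq_0)
  have "(pd2 1 H x u - lam x u h) * pd 2 w x u h = 0"
    using du G Iy(1) wu by (simp add: algebra_simps y_def h_def)
  then show Hu: "pd2 1 H x u = lam x u h"
    using wp by simp
  have "pd 0 w x u h + pd2 0 H x u * pd 2 w x u h - Phi x y
      = G x y * (pd2 0 I x y + (pd 0 w x u h + pd2 0 H x u * pd 2 w x u h) * pd2 1 I x y)"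
    using G Iy by (simp add: y_def h_def algebra_simps)
  then have "pd 0 w x u h + pd2 0 H x u * pd 2 w x u h = Phi x y"
    using dx by simp
  then have "(pd2 0 H x u + h * pd2 1 H x u - phi x u h) * pd 2 w x u h = 0"
    using Aw Hu wu by (simp add: vapp_def Afield_def comp_def y_def h_def algebra_simps)
  then show "pd2 0 H x u + H x u * pd2 1 H x u = phi x u h"
    using wp by (simp add: h_def)
qed

lemma integrating_factor_on_invariant_graph:
  fixes F phi :: fn3 and H :: "real \<Rightarrow> real \<Rightarrow> real"
  assumes H: "\<forall>(x,u)\<in>V. (\<lambda>(x,u). H x u) differentiable (at (x,u))"
    and F: "\<forall>(x,u)\<in>V. (\<lambda>(x,u,p). F x u p) differentiable (at (x, u, H x u)) \<and> F x u (H x u) \<noteq> 0"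
    and invariant: "\<forall>(x,u)\<in>V. pd2 0 H x u + H x u * pd2 1 H x u = phi x u (H x u)"
    and AF: "\<forall>(x,u)\<in>V. vapp (Afield phi) F x u (H x u) = pd2 1 H x u * F x u (H x u)"
  shows "integrating_factor_on V H (\<lambda>x u. 1 / F x u (H x u))"
  unfolding integrating_factor_on_def
proof clarify
  fix x u assume xu: "(x,u) \<in> V"
  define h where "h = H x u"
  have Hd: "(\<lambda>(x,u). H x u) differentiable (at (x,u))"
    and Fd: "(\<lambda>(x,u,p). F x u p) differentiable (at (x, u, H x u))" and Fnz: "F x u h \<noteq> 0"
    using H F xu by (auto simp: h_def)
  have inv: "phi x u h = pd2 0 H x u + h * pd2 1 H x u"
    using invariant xu by (auto simp: h_def)
  have "((\<lambda>t. 1 / F t u (H t u)) has_real_derivative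
      - (pd 0 F x u h + pd2 0 H x u * pd 2 F x u h) / (F x u h)\<^sup>2) (at x)"
    using DERIV_inverse_fun[OF has_real_derivative_along_graph(1)[OF Fd Hd]] Fnz
    by (simp add: h_def divide_inverse power2_eq_square algebra_simps)
  moreover have "((\<lambda>t. H x t * (1 / F x t (H x t))) has_real_derivative
      pd2 1 H x u / F x u h - h * (pd 1 F x u h + pd2 1 H x u * pd 2 F x u h) / (F x u h)\<^sup>2) (at u)"
    using DERIV_mult[OF has_real_derivative_compose2[of H "\<lambda>t. x" u "\<lambda>t. t" 0 1]
        DERIV_inverse_fun[OF has_real_derivative_along_graph(2)[OF Fd Hd]]] Hd Fnz
    by (simp add: h_def divide_inverse power2_eq_square algebra_simps)
  moreover have "- (pd 0 F x u h + pd2 0 H x u * pd 2 F x u h) / (F x u h)\<^sup>2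
      + (pd2 1 H x u / F x u h - h * (pd 1 F x u h + pd2 1 H x u * pd 2 F x u h) / (F x u h)\<^sup>2)
      = (pd2 1 H x u * F x u h - vapp (Afield phi) F x u h) / (F x u h)\<^sup>2"
    using Fnz by (simp add: inv vapp_def Afield_def comp_def field_simps power2_eq_square)
  ultimately show "deriv (\<lambda>t. 1 / F t u (H t u)) x + deriv (\<lambda>t. H x t * (1 / F x t (H x t))) u = 0"
    using AF xu by (auto simp: DERIV_imp_deriv h_def)
qed

lemma vapp_scaled_Xvf_coordinate:
  assumes "vapp (vscale f (Xvf lam)) w x u p = 0" "vapp (vscale f' (Xvf lam')) w x u p = 1"
    and "f x u p \<noteq> 0"
  shows "pd 1 w x u p + lam x u p * pd 2 w x u p = 0 \<and> pd 2 w x u p \<noteq> 0"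
proof -
  have "f x u p * (pd 1 w x u p + lam x u p * pd 2 w x u p) = 0"
    "f' x u p * (pd 1 w x u p + lam' x u p * pd 2 w x u p) = 1"
    using assms(1,2) by (simp_all add: vapp_def vscale_def Xvf_def comp_def algebra_simps)
  then show ?thesis
    using assms(3) by auto
qed

lemma integrating_factor_of_auxiliary_equation:
  fixes f g w phi lam :: fn3 and I G Phi H :: "real \<Rightarrow> real \<Rightarrow> real"
  assumes U: "open U" and W: "open W" and V: "open V"
    and smooth: "smooth3_on U f" "smooth3_on U g" "smooth3_on U w" "smooth2_on W I" "smooth2_on V H"
    and img: "\<forall>(x,u,p)\<in>U. (x, w x u p) \<in> W"
    and Xw: "\<forall>(x,u,p)\<in>U. pd 1 w x u p + lam x u p * pd 2 w x u p = 0 \<and> pd 2 w x u p \<noteq> 0"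
    and Aw: "\<forall>(x,u,p)\<in>U. vapp (Afield phi) w x u p = Phi x (w x u p)"
    and fi: "first_integral_on W Phi (\<lambda>x w. 1 / G x w) I"
    and G: "\<forall>(x,w)\<in>W. G x w \<noteq> 0"
    and Ag: "\<forall>(x,u,p)\<in>U. vapp (Afield phi) g x u p
          = (lam x u p - vapp (Afield phi) f x u p / f x u p) * g x u p"
    and fg: "\<forall>(x,u,p)\<in>U. f x u p \<noteq> 0 \<and> g x u p \<noteq> 0"
    and level: "\<forall>(x,u)\<in>V. (x, u, H x u) \<in> U \<and> I x (w x u (H x u)) = C"
  shows "integrating_factor_on V H (\<lambda>x u. 1 / (f x u (H x u) * g x u (H x u)))"
proof -
  have "(\<lambda>(x,u). H x u) differentiable (at (x,u))
    \<and> (\<lambda>(x,u,p). f x u p * g x u p) differentiable (at (x, u, H x u))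
    \<and> f x u (H x u) * g x u (H x u) \<noteq> 0
    \<and> pd2 0 H x u + H x u * pd2 1 H x u = phi x u (H x u)
    \<and> vapp (Afield phi) (\<lambda>x u p. f x u p * g x u p) x u (H x u)
        = pd2 1 H x u * (f x u (H x u) * g x u (H x u))"
    if xu: "(x,u) \<in> V" for x u
  proof -
    have P: "(x, u, H x u) \<in> U" and Q: "(x, w x u (H x u)) \<in> W"
      using level img xu by auto
    have fd: "(\<lambda>(x,u,p). f x u p) differentiable (at (x, u, H x u))"
      and gd: "(\<lambda>(x,u,p). g x u p) differentiable (at (x, u, H x u))"
      and wd: "(\<lambda>(x,u,p). w x u p) differentiable (at (x, u, H x u))"
      using smooth U P by (auto intro: smooth3_on_imp_differentiable_at)
    have Hd: "(\<lambda>(x,u). H x u) differentiable (at (x,u))"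
      using smooth V xu by (auto intro: smooth2_on_imp_differentiable_at)
    have "\<forall>(x,u)\<in>V. I x (w x u (H x u)) = C"
      using level by auto
    moreover have "G x (w x u (H x u)) \<noteq> 0"
      and "vapp (Afield phi) w x u (H x u) = Phi x (w x u (H x u))"
      and "pd 1 w x u (H x u) + lam x u (H x u) * pd 2 w x u (H x u) = 0"
      and "pd 2 w x u (H x u) \<noteq> 0"
      using G Q Aw Xw P by auto
    ultimately have slopes: "pd2 1 H x u = lam x u (H x u)"
      "pd2 0 H x u + H x u * pd2 1 H x u = phi x u (H x u)"
      using slopes_of_level_graph[OF V xu _ Hd wd smooth2_on_imp_differentiable_at[OF smooth(4) W Q] fi Q]
      by blast+
    have "vapp (Afield phi) (\<lambda>x u p. f x u p * g x u p) x u (H x u)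
        = lam x u (H x u) * (f x u (H x u) * g x u (H x u))"
    proof -
      have "vapp (Afield phi) g x u (H x u)
          = (lam x u (H x u) - vapp (Afield phi) f x u (H x u) / f x u (H x u)) * g x u (H x u)"
        and "f x u (H x u) \<noteq> 0"
        using Ag fg P by auto
      then show ?thesis
        by (simp add: vapp_mult[OF fd gd] field_simps)
    qed
    moreover have "(\<lambda>(x,u,p). f x u p * g x u p) differentiable (at (x, u, H x u))"
      using fd gd by (auto simp: split_def intro: differentiable_mult)
    ultimately show ?thesis
      using Hd slopes fg P by auto
  qed
  then show ?thesis
    by (intro integrating_factor_on_invariant_graph[where F="\<lambda>x u p. f x u p * g x u p" and phi=phi])
      auto
qed

theorem theorem6:
  fixes U :: "(real \<times> real \<times> real) set"
    and phi xi1 eta1 mu1 xi2 eta2 mu2 lam1 lam2 f1 f2 g1 g2 w1 w2 :: fn3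
    and W1 W2 :: "(real \<times> real) set"
    and Phi1 Phi2 G1 G2 I1 I2 :: "real \<Rightarrow> real \<Rightarrow> real"
  assumes U_open: "open U"
    and phi_smooth: "smooth3_on U phi"
    \<comment> \<open>two non-equivalent generalized C-infinity-symmetries\<close>
    and sm1: "smooth3_on U xi1" "smooth3_on U eta1" "smooth3_on U mu1"
    and sm2: "smooth3_on U xi2" "smooth3_on U eta2" "smooth3_on U mu2"
    and sym1: "gen_Cinf_sym U phi xi1 eta1 mu1"
    and sym2: "gen_Cinf_sym U phi xi2 eta2 mu2"
    and noneq: "\<not> A_equivalent U phi xi1 eta1 mu1 xi2 eta2 mu2"
    \<comment> \<open>(d/du, lam_i) are their canonical representatives\<close>
    and Q1: "\<forall>(x,u,p)\<in>U. charQ xi1 eta1 x u p \<noteq> 0"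
    and Q2: "\<forall>(x,u,p)\<in>U. charQ xi2 eta2 x u p \<noteq> 0"
    and lam1_def: "\<forall>(x,u,p)\<in>U. lam1 x u p = canon_lambda phi xi1 eta1 mu1 x u p"
    and lam2_def: "\<forall>(x,u,p)\<in>U. lam2 x u p = canon_lambda phi xi2 eta2 mu2 x u p"
    and lam_ne: "\<forall>(x,u,p)\<in>U. lam1 x u p - lam2 x u p \<noteq> 0"
    \<comment> \<open>f1, f2\<close>
    and f_smooth: "smooth3_on U f1" "smooth3_on U f2"
    and f_nz: "\<forall>(x,u,p)\<in>U. f1 x u p \<noteq> 0 \<and> f2 x u p \<noteq> 0"
    and f_eq: "\<forall>(x,u,p)\<in>U.
        (let rho = (vapp (Xvf lam1) lam2 x u p - vapp (Xvf lam2) lam1 x u p)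
                   / (lam1 x u p - lam2 x u p)
         in vapp (Xvf lam1) f2 x u p / f2 x u p = rho
          \<and> vapp (Xvf lam2) f1 x u p / f1 x u p = rho)"
    \<comment> \<open>g1, g2 (Y_i = f_i X_i, rho_i = lam_i - A(f_i)/f_i)\<close>
    and g_smooth: "smooth3_on U g1" "smooth3_on U g2"
    and g_nz: "\<forall>(x,u,p)\<in>U. g1 x u p \<noteq> 0 \<and> g2 x u p \<noteq> 0"
    and g_eq: "\<forall>(x,u,p)\<in>U.
        vapp (Afield phi) g1 x u p
          = (lam1 x u p - vapp (Afield phi) f1 x u p / f1 x u p) * g1 x u p
      \<and> vapp (vscale f2 (Xvf lam2)) g1 x u p = 0
      \<and> vapp (Afield phi) g2 x u p
          = (lam2 x u p - vapp (Afield phi) f2 x u p / f2 x u p) * g2 x u p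
      \<and> vapp (vscale f1 (Xvf lam1)) g2 x u p = 0"
    \<comment> \<open>local coordinates {x, w1, w2} with Y1 = d/dw2, Y2 = d/dw1\<close>
    and w_smooth: "smooth3_on U w1" "smooth3_on U w2"
    and w_inj: "inj_on (\<lambda>(x,u,p). (x, w1 x u p, w2 x u p)) U"
    and w_jac: "\<forall>(x,u,p)\<in>U. pd 1 w1 x u p * pd 2 w2 x u p - pd 2 w1 x u p * pd 1 w2 x u p \<noteq> 0"
    and Y_coords: "\<forall>(x,u,p)\<in>U.
        vapp (vscale f1 (Xvf lam1)) w1 x u p = 0 \<and> vapp (vscale f1 (Xvf lam1)) w2 x u p = 1
      \<and> vapp (vscale f2 (Xvf lam2)) w1 x u p = 1 \<and> vapp (vscale f2 (Xvf lam2)) w2 x u p = 0"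
    \<comment> \<open>phi_i = A(w_i) = Phi_i(x,w_i), g1 = G1(x,w2), g2 = G2(x,w1) in these coordinates\<close>
    and W_open: "open W1" "open W2"
    and W_img: "\<forall>(x,u,p)\<in>U. (x, w1 x u p) \<in> W1 \<and> (x, w2 x u p) \<in> W2"
    and Phi_smooth: "smooth2_on W1 Phi1" "smooth2_on W2 Phi2"
    and G_smooth: "smooth2_on W2 G1" "smooth2_on W1 G2"
    and G_nz: "\<forall>(x,w)\<in>W2. G1 x w \<noteq> 0" "\<forall>(x,w)\<in>W1. G2 x w \<noteq> 0"
    and Phi_coord: "\<forall>(x,u,p)\<in>U.
        vapp (Afield phi) w1 x u p = Phi1 x (w1 x u p)
      \<and> vapp (Afield phi) w2 x u p = Phi2 x (w2 x u p)"
    and G_coord: "\<forall>(x,u,p)\<in>U. g1 x u p = G1 x (w2 x u p) \<and> g2 x u p = G2 x (w1 x u p)"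
    \<comment> \<open>first integrals of the reduced equations with integrating factors 1/G2, 1/G1\<close>
    and I_smooth: "smooth2_on W1 I1" "smooth2_on W2 I2"
    and I1_fi: "first_integral_on W1 Phi1 (\<lambda>x w. 1 / G2 x w) I1"
    and I2_fi: "first_integral_on W2 Phi2 (\<lambda>x w. 1 / G1 x w) I2"
  shows
    "(\<forall>(C1::real) V H. open V \<and> smooth2_on V H \<and>
        (\<forall>(x,u)\<in>V. (x, u, H x u) \<in> U \<and> I1 x (w1 x u (H x u)) = C1)
        \<longrightarrow> integrating_factor_on V H (\<lambda>x u. 1 / (f1 x u (H x u) * g1 x u (H x u))))
   \<and> (\<forall>(C2::real) V H. open V \<and> smooth2_on V H \<and>
        (\<forall>(x,u)\<in>V. (x, u, H x u) \<in> U \<and> I2 x (w2 x u (H x u)) = C2)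
        \<longrightarrow> integrating_factor_on V H (\<lambda>x u. 1 / (f2 x u (H x u) * g2 x u (H x u))))"
proof -
  have Xw1: "\<forall>(x,u,p)\<in>U. pd 1 w1 x u p + lam1 x u p * pd 2 w1 x u p = 0 \<and> pd 2 w1 x u p \<noteq> 0"
  proof clarify
    fix x u p assume "(x,u,p) \<in> U"
    then show "pd 1 w1 x u p + lam1 x u p * pd 2 w1 x u p = 0 \<and> pd 2 w1 x u p \<noteq> 0"
      using Y_coords f_nz by (intro vapp_scaled_Xvf_coordinate[where f'=f2 and lam'=lam2]) auto
  qed
  have Xw2: "\<forall>(x,u,p)\<in>U. pd 1 w2 x u p + lam2 x u p * pd 2 w2 x u p = 0 \<and> pd 2 w2 x u p \<noteq> 0"
  proof clarify
    fix x u p assume "(x,u,p) \<in> U"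
    then show "pd 1 w2 x u p + lam2 x u p * pd 2 w2 x u p = 0 \<and> pd 2 w2 x u p \<noteq> 0"
      using Y_coords f_nz by (intro vapp_scaled_Xvf_coordinate[where f'=f1 and lam'=lam1]) auto
  qed
  show ?thesis
  proof (intro conjI allI impI; elim conjE)
    fix C1 V H
    assume "open V" "smooth2_on V H"
      and level: "\<forall>(x,u)\<in>V. (x, u, H x u) \<in> U \<and> I1 x (w1 x u (H x u)) = C1"
    show "integrating_factor_on V H (\<lambda>x u. 1 / (f1 x u (H x u) * g1 x u (H x u)))"
      by (rule integrating_factor_of_auxiliary_equation[OF U_open W_open(1) \<open>open V\<close> f_smooth(1)
            g_smooth(1) w_smooth(1) I_smooth(1) \<open>smooth2_on V H\<close> _ Xw1 _ I1_fi G_nz(2) _ _ level])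
        (use W_img Phi_coord g_eq f_nz g_nz in auto)
  next
    fix C2 V H
    assume "open V" "smooth2_on V H"
      and level: "\<forall>(x,u)\<in>V. (x, u, H x u) \<in> U \<and> I2 x (w2 x u (H x u)) = C2"
    show "integrating_factor_on V H (\<lambda>x u. 1 / (f2 x u (H x u) * g2 x u (H x u)))"
      by (rule integrating_factor_of_auxiliary_equation[OF U_open W_open(2) \<open>open V\<close> f_smooth(2)
            g_smooth(2) w_smooth(2) I_smooth(2) \<open>smooth2_on V H\<close> _ Xw2 _ I2_fi G_nz(1) _ _ level])
        (use W_img Phi_coord g_eq f_nz g_nz in auto)
  qed
qed

end
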